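(* Let $K,\bar M\ge 1$ be integers, $\lambda>0$, $d>0$, $D>0$, and let $\xi_1,\dots,\xi_K$ be independent random variables, each uniformly distributed on $[0,D]$. Consider the array of $K\bar M$ sensors with positions $\zeta_{(k,m)}=\xi_k+(m-1)d$, $k=1,\dots,K$, $m=1,\dots,\bar M$. For an angle $\theta\in(-\pi/2,\pi/2)$ let $\bm g(\theta)\in\mathbb{C}^{K\bar M}$ have entries $\exp(\jmath\frac{2\pi}{\lambda}\zeta_{(k,m)}\sin\theta)$ (with $\jmath=\sqrt{-1}$). For fixed angles $\theta_i,\theta_j$ define $$\mathcal G_{i,j}=\frac{\bm g(\theta_j)^H\bm g(\theta_i)}{\|\bm g(\theta_i)\|_2\,\|\bm g(\theta_j)\|_2},$$ and set $\varphi_{i,j}=\frac{\pi d}{\lambda}(\sin\theta_i-\sin\theta_j)$, $\rho_{i,j}=\frac{\pi D}{\lambda}(\sin\theta_i-\sin\theta_j)$, $\mathcal M_{i,j}=\frac{\sin(\bar M\varphi_{i,j})}{\bar M\sin\varphi_{i,j}}$. Then $$\big|\mathbb{E}[\mathcal G_{i,j}]\big|=|\mathcal M_{i,j}|\cdot\left|\frac{\sin\rho_{i,j}}{\rho_{i,j}}\right|,\qquad \mathbb{E}\big[|\mathcal G_{i,j}|^2\big]=|\mathcal M_{i,j}|^2\left(\frac1K+\Big(1-\frac1K\Big)\left|\frac{\sin\rho_{i,j}}{\rho_{i,j}}\right|^2\right),$$ with $\sin(0)/0$ and $\frac{\sin(\bar M\varphi)}{\bar M\sin\varphi}$ at zeros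 of $\sin\varphi$ interpreted by their limiting values.
   Context: This describes a fully calibrated distributed array of $K$ identical uniform linear subarrays, each with $\bar M$ sensors at spacing $d$; $\xi_k$ is the position of the first sensor of the $k$-th subarray, $D$ the whole array aperture, $\lambda$ the wavelength; $\mathcal G_{i,j}$ is the angular correlation coefficient between steering vectors for directions $\theta_i$ and $\theta_j$. *)

theory Defs
  imports "HOL-Probability.Probability"
begin

definition sensor_idx :: "nat \<Rightarrow> nat \<Rightarrow> (nat \<times> nat) set" where
  "sensor_idx K Mb = {..<K} \<times> {..<Mb}"

text \<open>Position of sensor (k,m): xi_k + m*d (0-based m, i.e. (m-1)d in 1-based indexing).\<close>
definition sensor_pos :: "(nat \<Rightarrow> real) \<Rightarrow> real \<Rightarrow> nat \<times> nat \<Rightarrow> real" where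
  "sensor_pos xi d km = xi (fst km) + real (snd km) * d"

definition steering :: "real \<Rightarrow> real \<Rightarrow> (nat \<Rightarrow> real) \<Rightarrow> real \<Rightarrow> nat \<times> nat \<Rightarrow> complex" where
  "steering lam d xi \<theta> km = exp (\<i> * complex_of_real (2 * pi / lam * sensor_pos xi d km * sin \<theta>))"

definition steering_norm :: "nat \<Rightarrow> nat \<Rightarrow> real \<Rightarrow> real \<Rightarrow> (nat \<Rightarrow> real) \<Rightarrow> real \<Rightarrow> real" where
  "steering_norm K Mb lam d xi \<theta> = sqrt (\<Sum>km\<in>sensor_idx K Mb. (cmod (steering lam d xi \<theta> km))\<^sup>2)"

definition angular_corr :: "nat \<Rightarrow> nat \<Rightarrow> real \<Rightarrow> real \<Rightarrow> (nat \<Rightarrow> real) \<Rightarrow> real \<Rightarrow> real \<Rightarrow> complex" where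
  "angular_corr K Mb lam d xi \<theta>i \<theta>j =
     (\<Sum>km\<in>sensor_idx K Mb. cnj (steering lam d xi \<theta>j km) * steering lam d xi \<theta>i km)
     / complex_of_real (steering_norm K Mb lam d xi \<theta>i * steering_norm K Mb lam d xi \<theta>j)"

definition sinc_lim :: "real \<Rightarrow> real" where
  "sinc_lim x = (if x = 0 then 1 else sin x / x)"

text \<open>sin(Mb phi)/(Mb sin phi), with its limiting value cos(Mb phi)/cos phi
  (L'Hopital) at zeros of sin phi.\<close>
definition array_factor :: "nat \<Rightarrow> real \<Rightarrow> real" where
  "array_factor Mb \<phi> = (if sin \<phi> = 0 then cos (real Mb * \<phi>) / cos \<phi>
                          else sin (real Mb * \<phi>) / (real Mb * sin \<phi>))"

end

theory Submission
  imports Defs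
begin

(* All steering entries have modulus one, so both norms equal sqrt (K Mb), and with
   u = 2 pi (sin theta_i - sin theta_j) / lambda the inner product factorises as T * W, where
   T = sum_k exp (i u xi_k) is the random inter-subarray term and W = sum_m exp (i u m d) the
   deterministic intra-subarray term. Summing the geometric series gives |W| = Mb |M_ij|.
   Each exp (i u xi_k) has as mean the characteristic function of the uniform law on [0, D],
   whose modulus is |sin rho / rho|; hence |E T| = K |sin rho / rho|, and in E |T|^2 the K
   diagonal terms contribute 1 each while, by independence, the K (K - 1) off-diagonal terms
   contribute |sin rho / rho|^2 each. *)

lemma iexp_double_minus_one: "iexp (2 * x) - 1 = 2 * \<i> * complex_of_real (sin x) * iexp x"
  using sin_double[of x] cos_double_sin[of x]
  by (simp add: complex_eq_iff Re_exp Im_exp power2_eq_square algebra_simps)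

lemma norm_iexp_double_minus_one: "cmod (iexp (2 * x) - 1) = 2 * \<bar>sin x\<bar>"
  unfolding iexp_double_minus_one by (simp add: norm_mult)

lemma integral_uniform_measure_interval:
  fixes f :: "real \<Rightarrow> 'b::{banach,second_countable_topology}"
  assumes "a < b" and [measurable]: "f \<in> borel_measurable borel"
  shows "integral\<^sup>L (uniform_measure lborel {a..b}) f = (LBINT x=a..b. f x) /\<^sub>R (b - a)"
proof -
  have "1 / ennreal (b - a) = ennreal (1 / (b - a))"
    using assms(1) by (metis divide_ennreal ennreal_1 zero_le_one diff_gt_0_iff_gt)
  then have "uniform_measure lborel {a..b} = density lborel (\<lambda>x. ennreal (indicator {a..b} x / (b - a)))"
    unfolding uniform_measure_def using assms(1)
    by (intro density_cong) (auto simp: indicator_def)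
  then have "integral\<^sup>L (uniform_measure lborel {a..b}) f
      = (LINT x|lborel. (indicator {a..b} x / (b - a)) *\<^sub>R f x)"
    using assms(1) by (simp add: integral_density)
  also have "\<dots> = (LBINT x : {a..b}. f x) /\<^sub>R (b - a)"
    unfolding set_lebesgue_integral_def by (simp add: integral_scaleR_right[symmetric] divide_inverse_commute)
  finally show ?thesis
    using assms(1) by (simp add: interval_integral_Icc)
qed

lemma interval_integral_iexp_mult:
  fixes a b t :: real
  assumes "t \<noteq> 0"
  shows "(CLBINT x=a..b. iexp (t * x)) = (iexp (t * b) - iexp (t * a)) / (\<i> * complex_of_real t)"
proof -
  have "((\<lambda>x. iexp (t * x) / (\<i> * complex_of_real t)) has_vector_derivative iexp (t * x)) (at x within S)"
    for x S
  proof -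
    have "((\<lambda>z. exp (\<i> * (complex_of_real t * z)) / (\<i> * complex_of_real t)) has_field_derivative
        iexp (t * x)) (at (complex_of_real x))"
      using assms by (auto intro!: derivative_eq_intros simp: field_simps)
    from has_vector_derivative_real_field[OF this, of S] show ?thesis by simp
  qed
  then show ?thesis
    by (subst interval_integral_FTC_finite) (auto intro!: continuous_intros simp: diff_divide_distrib)
qed

lemma char_uniform_measure_interval:
  fixes a b t :: real
  assumes "a < b"
  shows "char (uniform_measure lborel {a..b}) t
    = iexp (t * (a + b) / 2) * complex_of_real (sinc_lim (t * (b - a) / 2))"
proof (cases "t = 0")
  case True
  then show ?thesis using assms by (simp add: char_def sinc_lim_def)
next
  case False
  define h where "h = (b - a) / 2"
  have shift: "iexp (t * a) * iexp (2 * (t * h)) = iexp (t * b)"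
    and centre: "iexp (t * a) * iexp (t * h) = iexp (t * (a + b) / 2)"
    unfolding exp_add[symmetric] by (rule arg_cong[where f = exp], simp add: h_def field_simps)+
  have "iexp (t * b) - iexp (t * a) = iexp (t * a) * (iexp (2 * (t * h)) - 1)"
    by (simp only: right_diff_distrib mult_1_right shift)
  also have "\<dots> = 2 * \<i> * complex_of_real (sin (t * h)) * (iexp (t * a) * iexp (t * h))"
    by (simp only: iexp_double_minus_one) (simp only: ac_simps)
  also have "\<dots> = 2 * \<i> * complex_of_real (sin (t * h)) * iexp (t * (a + b) / 2)"
    by (simp only: centre)
  finally have increment: "iexp (t * b) - iexp (t * a)
      = 2 * \<i> * complex_of_real (sin (t * h)) * iexp (t * (a + b) / 2)" .
  have "char (uniform_measure lborel {a..b}) t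
      = ((iexp (t * b) - iexp (t * a)) / (\<i> * complex_of_real t)) /\<^sub>R (b - a)"
    unfolding char_def
    by (subst integral_uniform_measure_interval[OF assms]) (measurable, simp only: interval_integral_iexp_mult[OF False])
  also have "\<dots> = iexp (t * (a + b) / 2) * complex_of_real (sin (t * h) / (t * h))"
    unfolding increment scaleR_conv_of_real using assms False by (simp add: h_def field_simps)
  finally show ?thesis
    using assms False by (simp add: h_def sinc_lim_def)
qed

lemma norm_sum_iexp_eq_array_factor:
  assumes "n \<ge> 1"
  shows "cmod (\<Sum>m<n. iexp (2 * \<phi> * real m)) = real n * \<bar>array_factor n \<phi>\<bar>"
proof -
  define z where "z = iexp (2 * \<phi>)"
  have powers: "(\<Sum>m<n. iexp (2 * \<phi> * real m)) = (\<Sum>m<n. z ^ m)"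
    unfolding z_def exp_of_nat_mult[symmetric] by (intro sum.cong) (simp_all add: ac_simps)
  have z_minus_one: "cmod (z - 1) = 2 * \<bar>sin \<phi>\<bar>"
    unfolding z_def by (rule norm_iexp_double_minus_one)
  show ?thesis
  proof (cases "sin \<phi> = 0")
    case True
    then have "z = 1" using z_minus_one by simp
    obtain i :: int where i: "\<phi> = of_int i * pi" using True sin_zero_iff_int2 by blast
    have "sin (real n * \<phi>) = 0"
      unfolding sin_zero_iff_int2 using i by (intro exI[of _ "int n * i"]) simp
    then have "\<bar>cos (real n * \<phi>)\<bar> = 1"
      using sin_cos_squared_add[of "real n * \<phi>"] by (simp add: abs_square_eq_1)
    moreover have "\<bar>cos \<phi>\<bar> = 1"
      using sin_cos_squared_add[of \<phi>] True by (simp add: abs_square_eq_1)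
    ultimately show ?thesis
      unfolding powers using True \<open>z = 1\<close> by (simp add: array_factor_def abs_divide)
  next
    case False
    then have "z \<noteq> 1" using z_minus_one by auto
    have "cmod (z ^ n - 1) = 2 * \<bar>sin (real n * \<phi>)\<bar>"
      unfolding z_def exp_of_nat_mult[symmetric] norm_iexp_double_minus_one[symmetric]
      by (simp add: ac_simps)
    then have "cmod (\<Sum>m<n. iexp (2 * \<phi> * real m)) = \<bar>sin (real n * \<phi>)\<bar> / \<bar>sin \<phi>\<bar>"
      unfolding powers geometric_sum[OF \<open>z \<noteq> 1\<close>] norm_divide z_minus_one by simp
    then show ?thesis
      using False assms by (simp add: array_factor_def abs_divide abs_mult)
  qed
qed

lemma borel_measurable_cnj [measurable]: "cnj \<in> borel_measurable borel"
  by (rule borel_measurable_continuous_onI) (intro continuous_intros)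

lemma (in prob_space) integral_mult_cnj_indep_vars:
  fixes Z :: "'i \<Rightarrow> 'a \<Rightarrow> complex"
  assumes indep: "indep_vars (\<lambda>_. borel) Z I" and "i \<in> I" "j \<in> I" "i \<noteq> j"
    and "integrable M (Z i)" "integrable M (Z j)"
  shows "expectation (\<lambda>\<omega>. Z i \<omega> * cnj (Z j \<omega>)) = expectation (Z i) * cnj (expectation (Z j))"
proof -
  define Y :: "'i \<Rightarrow> complex \<Rightarrow> complex" where "Y k = (if k = j then cnj else id)" for k
  have "indep_vars (\<lambda>_. borel) (\<lambda>k \<omega>. Y k (Z k \<omega>)) {i, j}"
    by (rule indep_vars_subset[OF indep_vars_compose2[OF indep]]) (use assms in \<open>auto simp: Y_def\<close>)
  then have "expectation (\<lambda>\<omega>. \<Prod>k\<in>{i, j}. Y k (Z k \<omega>)) = (\<Prod>k\<in>{i, j}. expectation (\<lambda>\<omega>. Y k (Z k \<omega>)))"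
    by (intro indep_vars_lebesgue_integral) (use assms in \<open>auto simp: Y_def\<close>)
  then show ?thesis
    using \<open>i \<noteq> j\<close> by (simp add: Y_def)
qed

lemma (in prob_space) expectation_norm_sum_sq_indep_unimodular:
  fixes Z :: "'i \<Rightarrow> 'a \<Rightarrow> complex"
  assumes "finite I" and indep: "indep_vars (\<lambda>_. borel) Z I"
    and unimodular: "\<And>i \<omega>. i \<in> I \<Longrightarrow> cmod (Z i \<omega>) = 1"
    and mean: "\<And>i. i \<in> I \<Longrightarrow> expectation (Z i) = c"
  shows "expectation (\<lambda>\<omega>. (cmod (\<Sum>i\<in>I. Z i \<omega>))\<^sup>2)
    = real (card I) + real (card I) * (real (card I) - 1) * (cmod c)\<^sup>2"
proof -
  have [measurable]: "Z i \<in> borel_measurable M" if "i \<in> I" for i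
    using indep that unfolding indep_vars_def by auto
  have integrable: "integrable M (Z i)" if "i \<in> I" for i
    by (rule integrable_const_bound[where B = 1]) (use that unimodular in auto)
  have integrable_pair: "integrable M (\<lambda>\<omega>. Z i \<omega> * cnj (Z j \<omega>))" if "i \<in> I" "j \<in> I" for i j
    by (rule integrable_const_bound[where B = 1]) (use that unimodular in \<open>auto simp: norm_mult\<close>)
  have pair: "expectation (\<lambda>\<omega>. Z i \<omega> * cnj (Z j \<omega>))
      = (if i = j then 1 else complex_of_real ((cmod c)\<^sup>2))" if "i \<in> I" "j \<in> I" for i j
  proof (cases "i = j")
    case True
    have "Z i \<omega> * cnj (Z i \<omega>) = 1" for \<omega>
      using complex_norm_square[of "Z i \<omega>"] unimodular[OF \<open>i \<in> I\<close>, of \<omega>] by simp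
    then show ?thesis using True by (simp add: prob_space)
  next
    case False
    then show ?thesis
      using that integral_mult_cnj_indep_vars[OF indep that False] integrable mean
      by (simp add: complex_norm_square del: of_real_power)
  qed
  have "complex_of_real (expectation (\<lambda>\<omega>. (cmod (\<Sum>i\<in>I. Z i \<omega>))\<^sup>2))
      = expectation (\<lambda>\<omega>. \<Sum>i\<in>I. \<Sum>j\<in>I. Z i \<omega> * cnj (Z j \<omega>))"
    unfolding integral_complex_of_real[symmetric] complex_norm_square cnj_sum sum_product ..
  also have "\<dots> = (\<Sum>i\<in>I. \<Sum>j\<in>I. expectation (\<lambda>\<omega>. Z i \<omega> * cnj (Z j \<omega>)))"
    using integrable_pair by (simp add: Bochner_Integration.integral_sum Bochner_Integration.integrable_sum)
  also have "\<dots> = (\<Sum>i\<in>I. \<Sum>j\<in>I. complex_of_real ((cmod c)\<^sup>2) + (if i = j then 1 - complex_of_real ((cmod c)\<^sup>2) else 0))"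
    using pair by (intro sum.cong) auto
  also have "\<dots> = complex_of_real (real (card I) + real (card I) * (real (card I) - 1) * (cmod c)\<^sup>2)"
    using \<open>finite I\<close> by (simp add: sum.distrib algebra_simps)
  finally show ?thesis by (simp only: of_real_eq_iff)
qed

lemma (in prob_space) moments_sum_iexp_indep_uniform:
  fixes \<xi> :: "'i \<Rightarrow> 'a \<Rightarrow> real"
  assumes "finite I" and indep: "indep_vars (\<lambda>_. borel) \<xi> I"
    and uniform: "\<And>i. i \<in> I \<Longrightarrow> distr M lborel (\<xi> i) = uniform_measure lborel {a..b}"
    and "a < b"
  shows "cmod (expectation (\<lambda>\<omega>. \<Sum>i\<in>I. iexp (t * \<xi> i \<omega>)))
      = real (card I) * \<bar>sinc_lim (t * (b - a) / 2)\<bar>"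
    and "expectation (\<lambda>\<omega>. (cmod (\<Sum>i\<in>I. iexp (t * \<xi> i \<omega>)))\<^sup>2)
      = real (card I) + real (card I) * (real (card I) - 1) * \<bar>sinc_lim (t * (b - a) / 2)\<bar>\<^sup>2"
proof -
  define c where "c = char (uniform_measure lborel {a..b}) t"
  have [measurable]: "\<xi> i \<in> borel_measurable M" if "i \<in> I" for i
    using indep that unfolding indep_vars_def by auto
  have mean: "expectation (\<lambda>\<omega>. iexp (t * \<xi> i \<omega>)) = c" if "i \<in> I" for i
    using that uniform[OF that, symmetric] by (simp add: c_def char_def integral_distr)
  have norm_c: "cmod c = \<bar>sinc_lim (t * (b - a) / 2)\<bar>"
    unfolding c_def char_uniform_measure_interval[OF \<open>a < b\<close>] by (simp add: norm_mult)
  have "integrable M (\<lambda>\<omega>. iexp (t * \<xi> i \<omega>))" if "i \<in> I" for i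
    by (rule integrable_const_bound[where B = 1]) (use that in simp_all)
  then have "expectation (\<lambda>\<omega>. \<Sum>i\<in>I. iexp (t * \<xi> i \<omega>)) = of_nat (card I) * c"
    using mean by (simp add: Bochner_Integration.integral_sum)
  then show "cmod (expectation (\<lambda>\<omega>. \<Sum>i\<in>I. iexp (t * \<xi> i \<omega>)))
      = real (card I) * \<bar>sinc_lim (t * (b - a) / 2)\<bar>"
    by (simp add: norm_mult norm_c)
  have "indep_vars (\<lambda>_. borel) (\<lambda>i \<omega>. iexp (t * \<xi> i \<omega>)) I"
    by (rule indep_vars_compose2[OF indep]) measurable
  from expectation_norm_sum_sq_indep_unimodular[OF \<open>finite I\<close> this _ mean]
  show "expectation (\<lambda>\<omega>. (cmod (\<Sum>i\<in>I. iexp (t * \<xi> i \<omega>)))\<^sup>2)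
      = real (card I) + real (card I) * (real (card I) - 1) * \<bar>sinc_lim (t * (b - a) / 2)\<bar>\<^sup>2"
    by (simp add: norm_c)
qed

lemma steering_norm_eq: "steering_norm K Mb lam d xi \<theta> = sqrt (real (K * Mb))"
  unfolding steering_norm_def steering_def sensor_idx_def by simp

lemma cnj_steering_mult_steering:
  fixes lam d \<theta>i \<theta>j :: real and xi :: "nat \<Rightarrow> real"
  defines "u \<equiv> 2 * pi / lam * (sin \<theta>i - sin \<theta>j)"
  shows "cnj (steering lam d xi \<theta>j (k, m)) * steering lam d xi \<theta>i (k, m)
    = iexp (u * xi k) * iexp (u * (real m * d))"
proof -
  have "cnj (\<i> * complex_of_real (2 * pi / lam * sensor_pos xi d (k, m) * sin \<theta>j))
      + \<i> * complex_of_real (2 * pi / lam * sensor_pos xi d (k, m) * sin \<theta>i)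
      = \<i> * complex_of_real (u * xi k) + \<i> * complex_of_real (u * (real m * d))"
    unfolding u_def sensor_pos_def
    by (simp add: complex_eq_iff algebra_simps add_divide_distrib[symmetric] diff_divide_distrib[symmetric])
  then show ?thesis
    unfolding steering_def exp_cnj exp_add[symmetric] by (rule arg_cong)
qed

lemma angular_corr_eq_product:
  fixes lam d \<theta>i \<theta>j :: real and xi :: "nat \<Rightarrow> real"
  defines "u \<equiv> 2 * pi / lam * (sin \<theta>i - sin \<theta>j)"
  shows "angular_corr K Mb lam d xi \<theta>i \<theta>j
    = (\<Sum>k<K. iexp (u * xi k)) * (\<Sum>m<Mb. iexp (u * (real m * d))) / of_nat (K * Mb)"
proof -
  have "(\<Sum>km\<in>sensor_idx K Mb. cnj (steering lam d xi \<theta>j km) * steering lam d xi \<theta>i km)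
      = (\<Sum>(k, m)\<in>{..<K} \<times> {..<Mb}. iexp (u * xi k) * iexp (u * (real m * d)))"
    unfolding sensor_idx_def u_def by (intro sum.cong) (auto simp: cnj_steering_mult_steering)
  also have "\<dots> = (\<Sum>k<K. iexp (u * xi k)) * (\<Sum>m<Mb. iexp (u * (real m * d)))"
    unfolding sum_product sum.cartesian_product ..
  finally show ?thesis
    unfolding angular_corr_def steering_norm_eq by simp
qed

theorem proposition2:
  fixes M :: "'a measure" and \<xi> :: "nat \<Rightarrow> 'a \<Rightarrow> real"
    and K Mb :: nat and lam d D \<theta>i \<theta>j :: real
  assumes "prob_space M"
    and "K \<ge> 1" and "Mb \<ge> 1" and "lam > 0" and "d > 0" and "D > 0"
    and "prob_space.indep_vars M (\<lambda>_. borel) \<xi> {..<K}"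
    and "\<And>k. k < K \<Longrightarrow> distr M lborel (\<xi> k) = uniform_measure lborel {0..D}"
    and "\<theta>i \<in> {-pi/2<..<pi/2}" and "\<theta>j \<in> {-pi/2<..<pi/2}"
  shows "(cmod ((LINT \<omega>|M. angular_corr K Mb lam d (\<lambda>k. \<xi> k \<omega>) \<theta>i \<theta>j))
           = \<bar>array_factor Mb (pi * d / lam * (sin \<theta>i - sin \<theta>j))\<bar>
             * \<bar>sinc_lim (pi * D / lam * (sin \<theta>i - sin \<theta>j))\<bar>)
         \<and> ((LINT \<omega>|M. (cmod (angular_corr K Mb lam d (\<lambda>k. \<xi> k \<omega>) \<theta>i \<theta>j))\<^sup>2))
           = \<bar>array_factor Mb (pi * d / lam * (sin \<theta>i - sin \<theta>j))\<bar>\<^sup>2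
             * (1 / real K + (1 - 1 / real K)
                * \<bar>sinc_lim (pi * D / lam * (sin \<theta>i - sin \<theta>j))\<bar>\<^sup>2)"
proof -
  interpret prob_space M by fact
  define \<phi> where "\<phi> = pi * d / lam * (sin \<theta>i - sin \<theta>j)"
  define \<rho> where "\<rho> = pi * D / lam * (sin \<theta>i - sin \<theta>j)"
  define u where "u = 2 * pi / lam * (sin \<theta>i - sin \<theta>j)"
  define T where "T \<omega> = (\<Sum>k<K. iexp (u * \<xi> k \<omega>))" for \<omega>
  define W where "W = (\<Sum>m<Mb. iexp (u * (real m * d)))"
  have "u * (D - 0) / 2 = \<rho>"
    using \<open>lam > 0\<close> by (simp add: u_def \<rho>_def field_simps)
  with moments_sum_iexp_indep_uniform[OF finite_lessThan assms(7,8) \<open>D > 0\<close>, of u]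
  have moments: "cmod (expectation T) = real K * \<bar>sinc_lim \<rho>\<bar>"
    "expectation (\<lambda>\<omega>. (cmod (T \<omega>))\<^sup>2) = real K + real K * (real K - 1) * \<bar>sinc_lim \<rho>\<bar>\<^sup>2"
    unfolding T_def by simp_all
  have "W = (\<Sum>m<Mb. iexp (2 * \<phi> * real m))"
    unfolding W_def u_def \<phi>_def by (intro sum.cong) (simp_all add: field_simps)
  then have norm_W: "cmod W = real Mb * \<bar>array_factor Mb \<phi>\<bar>"
    using norm_sum_iexp_eq_array_factor[OF \<open>Mb \<ge> 1\<close>] by simp
  have G: "angular_corr K Mb lam d (\<lambda>k. \<xi> k \<omega>) \<theta>i \<theta>j = T \<omega> * W / of_nat (K * Mb)" for \<omega>
    unfolding angular_corr_eq_product T_def W_def u_def ..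
  have first_moment: "cmod (expectation (\<lambda>\<omega>. angular_corr K Mb lam d (\<lambda>k. \<xi> k \<omega>) \<theta>i \<theta>j))
      = \<bar>array_factor Mb \<phi>\<bar> * \<bar>sinc_lim \<rho>\<bar>"
    using moments(1) \<open>K \<ge> 1\<close> \<open>Mb \<ge> 1\<close> unfolding G by (simp add: norm_mult norm_divide norm_W)
  have "expectation (\<lambda>\<omega>. (cmod (angular_corr K Mb lam d (\<lambda>k. \<xi> k \<omega>) \<theta>i \<theta>j))\<^sup>2)
      = (cmod W / real (K * Mb))\<^sup>2 * expectation (\<lambda>\<omega>. (cmod (T \<omega>))\<^sup>2)"
    unfolding G by (simp add: norm_mult norm_divide power_mult_distrib power_divide)
  also have "\<dots> = \<bar>array_factor Mb \<phi>\<bar>\<^sup>2 * (1 / real K + (1 - 1 / real K) * \<bar>sinc_lim \<rho>\<bar>\<^sup>2)"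
    unfolding moments(2) norm_W using \<open>K \<ge> 1\<close> \<open>Mb \<ge> 1\<close> by (simp add: field_simps power2_eq_square)
  finally show ?thesis
    using first_moment unfolding \<phi>_def \<rho>_def by simp
qed

end
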